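(* Let $\mathfrak{B}$ be the Banach space of tensors (of a fixed shape) equipped with the spectral norm, and let $\mathcal{X}\in\mathfrak{B}$ be any zero-mean random Hermitian tensor. Then for every non-random Hermitian tensor $\mathcal{A}$ of the same dimensions as $\mathcal{X}$ with $\|\mathcal{A}\|_{(k)}>0$, $$\mathrm{Pr}\big(\|\mathcal{A}+\mathcal{X}\|_{(k)}\ge\|\mathcal{A}\|_{(k)}\big)\ge\frac14\inf_{f\in F}\frac{(\mathbb{E}|f(\mathcal{X})|)^2}{\mathbb{E}(f^2(\mathcal{X}))},$$ where $F$ is the family of linear functionals on $\mathfrak{B}$.
   Context: Singular values of a tensor are those of its unfolded matrix (identify multi-indices with single indices by a fixed bijection); $\|\mathcal{T}\|_{(k)}$ is the Ky Fan $k$-norm, the sum of the $k$ largest singular values. Hermitian means $\mathcal{X}^H=\mathcal{X}$ (conjugate transpose under the row/column multi-index split). *)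

theory Defs
  imports "HOL-Analysis.Analysis" "HOL-Probability.Probability"
    "HOL-Computational_Algebra.Polynomial"
begin

text \<open>A tensor with row multi-index set and column multi-index set both equal to the
  finite type 'n (multi-indices identified with the elements of 'n by a fixed bijection)
  is represented directly by its unfolded square matrix of type complex^'n^'n.\<close>

definition hconj :: "complex^'n^'n \<Rightarrow> complex^'n^'n" where
  "hconj A = (\<chi> i j. cnj (A $ j $ i))"

definition hermitian :: "complex^'n^'n \<Rightarrow> bool" where
  "hermitian A \<longleftrightarrow> hconj A = A"

definition char_poly_cart :: "complex^'n^'n \<Rightarrow> complex poly" where
  "char_poly_cart M = det ((\<chi> i j. (if i = j then [:0, 1:] else 0) - [:M $ i $ j:]) :: complex poly^'n^'n)"

definition singular_values :: "complex^'n^'n \<Rightarrow> real multiset" where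
  "singular_values A = image_mset (\<lambda>z. sqrt (Re z)) (proots (char_poly_cart (hconj A ** A)))"

definition ky_fan_norm :: "nat \<Rightarrow> complex^'n^'n \<Rightarrow> real" where
  "ky_fan_norm k A = sum_list (take k (rev (sorted_list_of_multiset (singular_values A))))"

text \<open>Paley--Zygmund ratio (E|f(X)|)^2 / E(f(X)^2); convention: value 1 if f(X)=0 a.s.
  (then the ratio is 0/0); x/\<infinity> = 0 in ennreal.\<close>
definition pz_ratio :: "'a measure \<Rightarrow> ('a \<Rightarrow> 'b) \<Rightarrow> ('b \<Rightarrow> real) \<Rightarrow> ennreal" where
  "pz_ratio M X f =
     (if (\<integral>\<^sup>+ \<omega>. ennreal ((f (X \<omega>))\<^sup>2) \<partial>M) = 0 then 1
      else (\<integral>\<^sup>+ \<omega>. ennreal \<bar>f (X \<omega>)\<bar> \<partial>M)\<^sup>2 / (\<integral>\<^sup>+ \<omega>. ennreal ((f (X \<omega>))\<^sup>2) \<partial>M))"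

end

(*
  The Ky Fan k-norm is the maximum of the linear functionals C |-> Re sum_j <y_j, C x_j>
  over pairs of mutually orthogonal families (x_j), (y_j) of vectors of length at most 1
  with sum_j |x_j|^2 <= k and sum_j |y_j|^2 <= k (Ky Fan's maximum principle, obtained from
  the singular value decomposition, Bessel's inequality and an exchange argument). The
  maximiser at A is a linear subgradient f, i.e. ||A||_(k) + f B <= ||A + B||_(k), so the
  event ||A + X||_(k) >= ||A||_(k) contains {f X >= 0}. As f X has mean zero,
  E|f X| = 2 E (f X)^+, and Cauchy-Schwarz for (f X)^+ = (f X)^+ 1_{f X >= 0} gives
  (E|f X|)^2 <= 4 P(f X >= 0) E (f X)^2.
*)

theory Submission
  imports Defs
begin

section \<open>Complex inner product\<close>

definition cinner :: "complex^'n \<Rightarrow> complex^'n \<Rightarrow> complex" where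
  "cinner x y = (\<Sum>i\<in>UNIV. cnj (x$i) * y$i)"

lemma cinner_add_left: "cinner (x + y) z = cinner x z + cinner y z"
  by (simp add: cinner_def sum.distrib algebra_simps)

lemma cinner_add_right: "cinner z (x + y) = cinner z x + cinner z y"
  by (simp add: cinner_def sum.distrib algebra_simps)

lemma cinner_diff_left: "cinner (x - y) z = cinner x z - cinner y z"
  by (simp add: cinner_def sum_subtractf algebra_simps)

lemma cinner_diff_right: "cinner z (x - y) = cinner z x - cinner z y"
  by (simp add: cinner_def sum_subtractf algebra_simps)

lemma cinner_smult_left: "cinner (c *s x) z = cnj c * cinner x z"
  by (simp add: cinner_def sum_distrib_left algebra_simps)

lemma cinner_smult_right: "cinner z (c *s x) = c * cinner z x"
  by (simp add: cinner_def sum_distrib_left algebra_simps)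

lemma cinner_scaleR_left: "cinner (c *\<^sub>R x) z = of_real c * cinner x z"
  by (simp add: cinner_def sum_distrib_left algebra_simps scaleR_vec_def scaleR_conv_of_real)

lemma cinner_scaleR_right: "cinner z (c *\<^sub>R x) = of_real c * cinner z x"
  by (simp add: cinner_def sum_distrib_left algebra_simps scaleR_vec_def scaleR_conv_of_real)

lemma cinner_zero_left [simp]: "cinner 0 z = 0"
  by (simp add: cinner_def)

lemma cinner_zero_right [simp]: "cinner z 0 = 0"
  by (simp add: cinner_def)

lemma cinner_sum_left: "cinner (\<Sum>i\<in>S. f i) z = (\<Sum>i\<in>S. cinner (f i) z)"
  by (induction S rule: infinite_finite_induct) (auto simp: cinner_add_left)

lemma cinner_sum_right: "cinner z (\<Sum>i\<in>S. f i) = (\<Sum>i\<in>S. cinner z (f i))"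
  by (induction S rule: infinite_finite_induct) (auto simp: cinner_add_right)

lemma cinner_commute: "cinner y x = cnj (cinner x y)"
  by (simp add: cinner_def mult.commute)

lemma cinner_eq_0_commute: "cinner x y = 0 \<longleftrightarrow> cinner y x = 0"
  by (metis cinner_commute complex_cnj_zero_iff)

lemma cmod_cinner_commute: "cmod (cinner x y) = cmod (cinner y x)"
  by (metis cinner_commute complex_mod_cnj)

lemma cnj_mult_self: "cnj z * z = complex_of_real ((cmod z)\<^sup>2)"
  by (metis complex_norm_square mult.commute of_real_power)

lemma cinner_self: "cinner x x = complex_of_real ((norm x)\<^sup>2)"
  by (simp add: cinner_def norm_vec_def L2_set_def sum_nonneg cnj_mult_self)

lemma norm_eq_1_iff_cinner: "norm x = 1 \<longleftrightarrow> cinner x x = 1"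
proof -
  have "cinner x x = 1 \<longleftrightarrow> (norm x)\<^sup>2 = 1"
    by (simp only: cinner_self of_real_eq_1_iff)
  then show ?thesis
    using norm_ge_zero[of x] by (auto simp: power2_eq_1_iff)
qed

lemma Re_cinner: "Re (cinner x y) = inner x y"
  by (simp add: cinner_def inner_vec_def inner_complex_def)

lemma cinner_eq_0_iff_inner: "cinner x y = 0 \<longleftrightarrow> inner x y = 0 \<and> inner x (\<i> *s y) = 0"
proof -
  have "inner x (\<i> *s y) = - Im (cinner x y)"
    by (simp add: Re_cinner[symmetric] cinner_smult_right)
  then show ?thesis by (simp add: complex_eq_iff Re_cinner[symmetric])
qed

lemma continuous_on_cinner_right: "continuous_on UNIV (cinner w)"
  unfolding cinner_def by (intro continuous_intros)

lemma matrix_vector_mult_smult: "(A::'a::comm_ring_1^'n^'m) *v (c *s x) = c *s (A *v x)"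
  by (simp add: matrix_vector_mult_def vec_eq_iff sum_distrib_left algebra_simps)

lemma cinner_hconj: "cinner (A *v x) y = cinner x (hconj A *v y)"
proof -
  have "cinner (A *v x) y = (\<Sum>i\<in>UNIV. \<Sum>j\<in>UNIV. cnj (A$i$j) * cnj (x$j) * y$i)"
    by (simp add: cinner_def matrix_vector_mult_def sum_distrib_right)
  also have "\<dots> = (\<Sum>j\<in>UNIV. \<Sum>i\<in>UNIV. cnj (A$i$j) * cnj (x$j) * y$i)"
    by (rule sum.swap)
  also have "\<dots> = cinner x (hconj A *v y)"
    by (simp add: cinner_def matrix_vector_mult_def hconj_def sum_distrib_left mult_ac)
  finally show ?thesis .
qed

lemma hermitian_cinner: "hermitian H \<Longrightarrow> cinner (H *v x) y = cinner x (H *v y)"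
  by (metis cinner_hconj hermitian_def)

lemma hermitian_gram: "hermitian (hconj C ** C)"
  by (simp add: hermitian_def hconj_def matrix_matrix_mult_def vec_eq_iff mult.commute)

lemma hermitian_cinner_self_real:
  "hermitian H \<Longrightarrow> cinner x (H *v x) = of_real (Re (cinner x (H *v x)))"
  by (metis hermitian_cinner cinner_commute complex_is_Real_iff Reals_cnj_iff of_real_Re)

lemma complex_matrix_vector_mult_scaleR: "(A::complex^'n^'m) *v (c *\<^sub>R x) = c *\<^sub>R (A *v x)"
  by (rule linear_scale[OF matrix_vector_mul_linear])

section \<open>Spectral theorem for Hermitian matrices\<close>

lemma exists_unit_cinner_orthogonal:
  fixes W :: "(complex^'n) set"
  assumes "finite W" "card W < CARD('n)"
  shows "\<exists>x. norm x = 1 \<and> (\<forall>w\<in>W. cinner w x = 0)"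
proof -
  let ?B = "W \<union> (\<lambda>w. \<i> *s w) ` W"
  have "card ?B \<le> card W + card ((\<lambda>w. \<i> *s w) ` W)" by (rule card_Un_le)
  also have "\<dots> \<le> 2 * card W" using card_image_le[OF assms(1)] by simp
  finally have "dim ?B < DIM(complex^'n)"
    using assms dim_le_card'[of ?B] by (simp add: DIM_cart)
  then obtain z where z: "z \<noteq> 0" "\<And>y. y \<in> span ?B \<Longrightarrow> orthogonal z y"
    using orthogonal_to_subspace_exists by blast
  have "cinner w z = 0" if "w \<in> W" for w
  proof -
    have "inner z w = 0" "inner z (\<i> *s w) = 0"
      using z(2)[of w] z(2)[of "\<i> *s w"] that by (auto simp: orthogonal_def span_base)
    then have "cinner z w = 0" by (simp add: cinner_eq_0_iff_inner)
    then show ?thesis by (metis cinner_eq_0_commute)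
  qed
  then show ?thesis using z(1)
    by (intro exI[of _ "(1 / norm z) *\<^sub>R z"]) (auto simp: cinner_scaleR_right)
qed

lemma hermitian_max_quadratic_form_eigenvector:
  fixes H :: "complex^'n^'n"
  assumes herm: "hermitian H" and S: "subspace S"
    and x: "x \<in> S" "norm x = 1" "H *v x \<in> S"
    and max: "\<And>y. y \<in> S \<Longrightarrow> Re (cinner y (H *v y)) \<le> Re (cinner x (H *v x)) * (norm y)\<^sup>2"
  shows "H *v x = Re (cinner x (H *v x)) *\<^sub>R x"
proof -
  define R where "R y = Re (cinner y (H *v y))" for y
  define lam where "lam = R x"
  define w where "w = H *v x - lam *\<^sub>R x"
  define a where "a = (norm w)\<^sup>2"
  define c where "c = lam * a - R w"
  have xHx: "cinner x (H *v x) = of_real lam"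
    using hermitian_cinner_self_real[OF herm] by (simp add: lam_def R_def)
  have xx: "cinner x x = 1" using x(2) by (simp add: norm_eq_1_iff_cinner)
  have wS: "w \<in> S" using S x by (simp add: w_def subspace_diff subspace_scale)
  have xw: "cinner x w = 0"
    by (simp add: w_def cinner_diff_right cinner_scaleR_right xHx xx)
  then have wx: "cinner w x = 0" by (simp add: cinner_eq_0_commute)
  have ww: "cinner w w = of_real a" by (simp add: a_def cinner_self)
  have wHx: "cinner w (H *v x) = of_real a"
    using ww wx by (simp add: w_def cinner_diff_right cinner_scaleR_right)
  have xHw: "cinner x (H *v w) = of_real a"
    using wHx by (metis hermitian_cinner[OF herm] cinner_commute complex_cnj_complex_of_real)
  \<comment> \<open>Testing maximality along the line x + t w shows that the residual w vanishes.\<close>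
  have key: "2 * a \<le> t * c" if "t > 0" for t
  proof -
    have "x + t *\<^sub>R w \<in> S" using S x wS by (simp add: subspace_add subspace_scale)
    then have "R (x + t *\<^sub>R w) \<le> lam * (norm (x + t *\<^sub>R w))\<^sup>2"
      using max by (simp add: R_def lam_def)
    moreover have "cinner (x + t *\<^sub>R w) (x + t *\<^sub>R w) = of_real (1 + t\<^sup>2 * a)"
      by (simp add: cinner_add_left cinner_add_right cinner_scaleR_left cinner_scaleR_right
          xx xw wx ww power2_eq_square)
    then have "(norm (x + t *\<^sub>R w))\<^sup>2 = 1 + t\<^sup>2 * a"
      unfolding cinner_self of_real_eq_iff .
    moreover have "cinner (x + t *\<^sub>R w) (H *v (x + t *\<^sub>R w))
        = cinner x (H *v x) + of_real t * cinner x (H *v w) + of_real t * cinner w (H *v x)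
          + of_real t * (of_real t * cinner w (H *v w))"
      by (simp add: matrix_vector_right_distrib complex_matrix_vector_mult_scaleR
          cinner_add_left cinner_add_right cinner_scaleR_left cinner_scaleR_right distrib_left)
    then have "R (x + t *\<^sub>R w) = lam + 2 * t * a + t\<^sup>2 * R w"
      by (simp add: R_def xHx xHw wHx power2_eq_square)
    ultimately have "lam + 2 * t * a + t\<^sup>2 * R w \<le> lam * (1 + t\<^sup>2 * a)"
      by simp
    then have "t * (2 * a) \<le> t * (t * c)"
      by (simp add: c_def algebra_simps power2_eq_square)
    then show ?thesis using that by simp
  qed
  have "a = 0"
  proof (rule ccontr)
    assume "a \<noteq> 0"
    then have "a > 0" by (simp add: a_def)
    define t where "t = a / (\<bar>c\<bar> + 1)"
    have "t > 0" using \<open>a > 0\<close> by (simp add: t_def)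
    have "t * c \<le> t * \<bar>c\<bar>" using \<open>t > 0\<close> by (simp add: mult_left_mono)
    also have "\<dots> < a" using \<open>a > 0\<close> by (simp add: t_def field_simps)
    finally show False using key[OF \<open>t > 0\<close>] \<open>a > 0\<close> by simp
  qed
  then have "w = 0" by (simp add: a_def)
  then show ?thesis by (simp only: w_def lam_def R_def right_minus_eq)
qed

lemma hermitian_eigenvector_cinner_orthogonal:
  fixes H :: "complex^'n^'n" and W :: "(complex^'n) set"
  assumes herm: "hermitian H" and W: "finite W" "card W < CARD('n)"
    and eig: "\<forall>w\<in>W. \<exists>\<mu>::real. H *v w = \<mu> *\<^sub>R w"
  shows "\<exists>x (\<mu>::real). norm x = 1 \<and> (\<forall>w\<in>W. cinner w x = 0) \<and> H *v x = \<mu> *\<^sub>R x"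
proof -
  define S where "S = {x. \<forall>w\<in>W. cinner w x = 0}"
  define R where "R x = Re (cinner x (H *v x))" for x
  have S: "subspace S"
    by (auto simp: subspace_def S_def cinner_add_right cinner_scaleR_right)
  have HS: "H *v x \<in> S" if "x \<in> S" for x
  proof -
    have "cinner u (H *v x) = 0" if "u \<in> W" for u
    proof -
      obtain \<mu> :: real where "H *v u = \<mu> *\<^sub>R u" using eig \<open>u \<in> W\<close> by blast
      then show ?thesis
        using \<open>x \<in> S\<close> \<open>u \<in> W\<close> hermitian_cinner[OF herm, of u x]
        by (simp add: S_def cinner_scaleR_left)
    qed
    then show ?thesis by (simp add: S_def)
  qed
  have "S = (\<Inter>w\<in>W. {x. cinner w x = 0})" by (auto simp: S_def)
  then have "closed S"
    using closed_Collect_eq[OF continuous_on_cinner_right continuous_on_const] by auto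
  then have "compact (S \<inter> sphere 0 1)" by (simp add: closed_Int_compact)
  moreover have "S \<inter> sphere 0 1 \<noteq> {}"
    using exists_unit_cinner_orthogonal[OF W] by (auto simp: S_def)
  moreover have "continuous_on (S \<inter> sphere 0 1) R"
    unfolding R_def cinner_def matrix_vector_mult_def by (intro continuous_intros)
  ultimately obtain x where x: "x \<in> S" "norm x = 1" and max: "\<And>y. y \<in> S \<inter> sphere 0 1 \<Longrightarrow> R y \<le> R x"
    using continuous_attains_sup by (metis IntE mem_sphere_0)
  have "R y \<le> R x * (norm y)\<^sup>2" if "y \<in> S" for y
  proof (cases "y = 0")
    case True then show ?thesis by (simp add: R_def)
  next
    case False
    have "R ((1 / norm y) *\<^sub>R y) \<le> R x"
      using that False S by (intro max) (simp add: subspace_scale)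
    then show ?thesis using False
      by (simp add: R_def complex_matrix_vector_mult_scaleR cinner_scaleR_left cinner_scaleR_right
          field_simps power2_eq_square)
  qed
  then have "H *v x = R x *\<^sub>R x"
    unfolding R_def by (rule hermitian_max_quadratic_form_eigenvector[OF herm S x HS[OF x(1)]])
  then show ?thesis using x by (auto simp: S_def)
qed

lemma hermitian_orthonormal_eigenvectors:
  fixes H :: "complex^'n^'n"
  assumes herm: "hermitian H" and "m \<le> CARD('n)"
  shows "\<exists>W. finite W \<and> card W = m \<and> (\<forall>w\<in>W. norm w = 1 \<and> (\<exists>\<mu>::real. H *v w = \<mu> *\<^sub>R w))
           \<and> pairwise (\<lambda>w w'. cinner w w' = 0) W"
  using assms(2)
proof (induction m)
  case 0 then show ?case by (intro exI[of _ "{}"]) auto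
next
  case (Suc m)
  then obtain W where W: "finite W" "card W = m" "\<forall>w\<in>W. norm w = 1 \<and> (\<exists>\<mu>::real. H *v w = \<mu> *\<^sub>R w)"
    "pairwise (\<lambda>w w'. cinner w w' = 0) W" by auto
  obtain x and \<mu> :: real where x: "norm x = 1" "\<forall>w\<in>W. cinner w x = 0" "H *v x = \<mu> *\<^sub>R x"
    using hermitian_eigenvector_cinner_orthogonal[OF herm W(1)] W Suc.prems by fastforce
  have "x \<notin> W" using x(1,2) by (metis norm_eq_1_iff_cinner zero_neq_one)
  then show ?case
    using W x by (intro exI[of _ "insert x W"]) (auto simp: pairwise_insert cinner_eq_0_commute)
qed

definition orthonormal_system :: "('i \<Rightarrow> complex^'n) \<Rightarrow> bool" where
  "orthonormal_system v \<longleftrightarrow> (\<forall>i j. cinner (v i) (v j) = (if i = j then 1 else 0))"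

lemma hermitian_eigenbasis:
  fixes H :: "complex^'n^'n"
  assumes "hermitian H"
  obtains v :: "'n \<Rightarrow> complex^'n" and ev :: "'n \<Rightarrow> real"
  where "orthonormal_system v" "\<And>i. H *v v i = ev i *\<^sub>R v i"
proof -
  obtain W where W: "finite W" "card W = CARD('n)" "\<forall>w\<in>W. norm w = 1 \<and> (\<exists>\<mu>::real. H *v w = \<mu> *\<^sub>R w)"
     "pairwise (\<lambda>w w'. cinner w w' = 0) W"
    using hermitian_orthonormal_eigenvectors[OF assms order_refl] by blast
  obtain v where v: "bij_betw v (UNIV::'n set) W"
    using finite_same_card_bij[of "UNIV::'n set" W] W by auto
  have vW: "v i \<in> W" for i using v by (auto simp: bij_betw_def)
  have "cinner (v i) (v j) = (if i = j then 1 else 0)" for i j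
  proof (cases "i = j")
    case True then show ?thesis using W(3) vW norm_eq_1_iff_cinner by auto
  next
    case False
    then have "v i \<noteq> v j" using bij_betw_imp_inj_on[OF v] by (auto simp: inj_def)
    then show ?thesis using W(4) vW False by (simp add: pairwise_def)
  qed
  then have "orthonormal_system v" by (simp add: orthonormal_system_def)
  moreover have "\<forall>i. \<exists>\<mu>::real. H *v v i = \<mu> *\<^sub>R v i"
    using W(3) vW by blast
  ultimately show ?thesis using that choice by metis
qed

section \<open>Singular values\<close>

definition const_poly_mat :: "'a::zero^'n^'m \<Rightarrow> 'a poly^'n^'m" where
  "const_poly_mat A = (\<chi> i j. [:A$i$j:])"

lemma const_poly_sum: "[:sum f S:] = (\<Sum>i\<in>S. [:f i:])"
  by (rule poly_eqI) (simp add: coeff_sum coeff_pCons split: nat.split)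

lemma const_poly_mat_mult:
  "const_poly_mat (A ** B) = const_poly_mat A ** const_poly_mat (B::'a::comm_ring_1^_^_)"
  by (simp add: const_poly_mat_def matrix_matrix_mult_def vec_eq_iff const_poly_sum mult.commute)

lemma const_poly_mat_one: "const_poly_mat (mat 1 :: 'a::comm_ring_1^'n^'n) = mat 1"
  by (simp add: const_poly_mat_def mat_def vec_eq_iff)

lemma matrix_mul_mat_commute: "(A::'a::comm_ring_1^'n^'n) ** mat c = mat c ** A"
  unfolding matrix_matrix_mult_def mat_def
  by (auto simp: vec_eq_iff if_distrib if_distribR sum.delta sum.delta' mult.commute cong: if_cong)

lemma matrix_diff_ldistrib: "(A::'a::comm_ring_1^'n^'m) ** (B - C) = A ** B - A ** C"
  by (simp add: matrix_matrix_mult_def vec_eq_iff sum_subtractf algebra_simps)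

lemma matrix_diff_rdistrib: "((B::'a::comm_ring_1^'n^'m) - C) ** A = B ** A - C ** A"
  by (simp add: matrix_matrix_mult_def vec_eq_iff sum_subtractf algebra_simps)

lemma char_poly_cart_eq_det: "char_poly_cart M = det (mat [:0, 1:] - const_poly_mat M)"
  unfolding char_poly_cart_def
  by (rule arg_cong[where f = det]) (simp add: mat_def const_poly_mat_def vec_eq_iff)

lemma char_poly_cart_similar:
  fixes H Q U :: "complex^'n^'n"
  assumes QU: "Q ** U = mat 1"
  shows "char_poly_cart (Q ** H ** U) = char_poly_cart H"
proof -
  let ?X = "mat [:0, 1:] :: complex poly^'n^'n"
  let ?Q = "const_poly_mat Q" and ?U = "const_poly_mat U"
  have QU': "?Q ** ?U = mat 1" using QU by (metis const_poly_mat_one const_poly_mat_mult)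
  have "?Q ** (?X - const_poly_mat H) ** ?U = ?Q ** ?X ** ?U - ?Q ** const_poly_mat H ** ?U"
    by (simp add: matrix_diff_ldistrib matrix_diff_rdistrib)
  also have "?Q ** ?X ** ?U = ?X"
    by (metis QU' matrix_mul_assoc matrix_mul_mat_commute matrix_mul_rid)
  also have "?Q ** const_poly_mat H ** ?U = const_poly_mat (Q ** H ** U)"
    by (simp add: const_poly_mat_mult)
  finally have "det ?Q * det (?X - const_poly_mat H) * det ?U = det (?X - const_poly_mat (Q ** H ** U))"
    by (metis det_mul)
  moreover have "det ?Q * det ?U = 1" using QU' by (metis det_I det_mul)
  then have "det (?X - const_poly_mat H) = det ?Q * det ?U * det (?X - const_poly_mat H)"
    by simp
  ultimately show ?thesis
    unfolding char_poly_cart_eq_det by (simp add: mult_ac)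
qed

lemma char_poly_cart_diagonal:
  assumes "\<And>i j. i \<noteq> j \<Longrightarrow> D$i$j = 0"
  shows "char_poly_cart D = (\<Prod>i\<in>UNIV. [:- D$i$i, 1:])"
  unfolding char_poly_cart_def using assms by (subst det_diagonal) auto

lemma proots_prod_linear:
  "proots (\<Prod>i\<in>(UNIV::'n::finite set). [:- c i, 1:]) = image_mset c (mset_set UNIV)"
  by (subst proots_prod) (auto simp: sum_unfold_sum_mset)

definition matrix_of_columns :: "('n \<Rightarrow> 'a^'m) \<Rightarrow> 'a^'n^'m" where
  "matrix_of_columns v = (\<chi> r c. v c $ r)"

lemma orthonormal_system_unitary:
  fixes v :: "'n \<Rightarrow> complex^'n"
  assumes "orthonormal_system v"
  shows "hconj (matrix_of_columns v) ** matrix_of_columns v = mat 1"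
    and "matrix_of_columns v ** hconj (matrix_of_columns v) = mat 1"
proof -
  show "hconj (matrix_of_columns v) ** matrix_of_columns v = mat 1"
    using assms by (simp add: orthonormal_system_def matrix_of_columns_def hconj_def
        matrix_matrix_mult_def mat_def vec_eq_iff cinner_def)
  then show "matrix_of_columns v ** hconj (matrix_of_columns v) = mat 1"
    using matrix_left_right_inverse by blast
qed

lemma orthonormal_system_expansion:
  fixes v :: "'n \<Rightarrow> complex^'n"
  assumes "orthonormal_system v"
  shows "x = (\<Sum>c\<in>UNIV. cinner (v c) x *s v c)"
proof -
  have "x = (matrix_of_columns v ** hconj (matrix_of_columns v)) *v x"
    using orthonormal_system_unitary(2)[OF assms] by simp
  also have "\<dots> = (\<Sum>c\<in>UNIV. cinner (v c) x *s v c)"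
    by (simp add: matrix_of_columns_def hconj_def matrix_matrix_mult_def matrix_vector_mult_def
        vec_eq_iff cinner_def sum_distrib_left sum_distrib_right sum_component mult_ac;
        intro allI; rule sum.swap)
  finally show ?thesis .
qed

lemma matrix_of_columns_eigenvectors:
  fixes H :: "complex^'n^'n" and v :: "'n \<Rightarrow> complex^'n" and ev :: "'n \<Rightarrow> real"
  assumes eig: "\<And>i. H *v v i = ev i *\<^sub>R v i"
  shows "H ** matrix_of_columns v
    = matrix_of_columns v ** (\<chi> i j. if i = j then of_real (ev i) else 0)"
proof -
  have "(H ** matrix_of_columns v)$r$c = (H *v v c)$r" for r c
    by (simp add: matrix_of_columns_def matrix_matrix_mult_def matrix_vector_mult_def)
  moreover have "(matrix_of_columns v ** (\<chi> i j. if i = j then of_real (ev i) else 0))$r$c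
      = of_real (ev c) * v c $ r" for r c
    by (simp add: matrix_of_columns_def matrix_matrix_mult_def if_distrib if_distribR
        sum.delta' mult.commute cong: if_cong)
  moreover have "(ev c *\<^sub>R v c)$r = of_real (ev c) * v c $ r" for r c
    by (subst vector_scaleR_component) (simp add: scaleR_conv_of_real)
  ultimately show ?thesis by (simp add: vec_eq_iff eig)
qed

lemma singular_value_basis:
  fixes C :: "complex^'n^'n"
  obtains v :: "'n \<Rightarrow> complex^'n"
  where "orthonormal_system v" "\<And>i j. i \<noteq> j \<Longrightarrow> cinner (C *v v i) (C *v v j) = 0"
    "singular_values C = image_mset (\<lambda>i. norm (C *v v i)) (mset_set UNIV)"
proof -
  define H where "H = hconj C ** C"
  obtain v :: "'n \<Rightarrow> complex^'n" and ev where
    on: "orthonormal_system v" and eig: "\<And>i. H *v v i = ev i *\<^sub>R v i"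
    using hermitian_eigenbasis[OF hermitian_gram[of C]] unfolding H_def by blast
  have gram: "cinner (C *v v i) (C *v v j) = (if i = j then of_real (ev i) else 0)" for i j
  proof -
    have "cinner (C *v v i) (C *v v j) = cinner (v i) (H *v v j)"
      by (simp only: H_def cinner_hconj matrix_vector_mul_assoc)
    also have "\<dots> = of_real (ev j) * cinner (v i) (v j)"
      by (simp only: eig cinner_scaleR_right)
    finally show ?thesis using on by (simp add: orthonormal_system_def)
  qed
  have norm_sq: "(norm (C *v v i))\<^sup>2 = ev i" for i
    using gram[of i i] unfolding cinner_self by (simp only: if_P of_real_eq_iff refl)
  have orth: "cinner (C *v v i) (C *v v j) = 0" if "i \<noteq> j" for i j
    using gram that by simp
  define U where "U = matrix_of_columns v"
  define D :: "complex^'n^'n" where "D = (\<chi> i j. if i = j then of_real (ev i) else 0)"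
  have "H ** U = U ** D"
    unfolding U_def D_def by (rule matrix_of_columns_eigenvectors[OF eig])
  then have "hconj U ** H ** U = D"
    using orthonormal_system_unitary(1)[OF on]
    by (metis U_def matrix_mul_assoc matrix_mul_lid)
  then have "char_poly_cart H = (\<Prod>i\<in>UNIV. [:- D$i$i, 1:])"
    using char_poly_cart_similar[OF orthonormal_system_unitary(1)[OF on], of H]
      char_poly_cart_diagonal[of D] by (simp add: U_def D_def)
  then have "proots (char_poly_cart H) = image_mset (\<lambda>i. of_real (ev i)) (mset_set UNIV)"
    using proots_prod_linear[of "\<lambda>i. D$i$i"] by (simp add: D_def)
  then have "singular_values C = image_mset (\<lambda>i. norm (C *v v i)) (mset_set UNIV)"
    by (simp add: singular_values_def H_def[symmetric] multiset.map_comp o_def flip: norm_sq)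
  then show ?thesis using that on orth by blast
qed

section \<open>Ky Fan's maximum principle\<close>

lemma sum_largest_values:
  fixes \<sigma> :: "'n::finite \<Rightarrow> real"
  assumes k: "1 \<le> k" "k \<le> CARD('n)"
  obtains T t where "card T = k"
    "sum_list (take k (rev (sorted_list_of_multiset (image_mset \<sigma> (mset_set UNIV))))) = sum \<sigma> T"
    "\<And>i. i \<in> T \<Longrightarrow> t \<le> \<sigma> i" "\<And>i. i \<notin> T \<Longrightarrow> \<sigma> i \<le> t" "t \<in> \<sigma> ` T"
proof -
  obtain xs :: "'n list" where xs: "distinct xs" "set xs = UNIV"
    using finite_distinct_list[of "UNIV::'n set"] by auto
  define ys where "ys = sort_key (\<lambda>i. - \<sigma> i) xs"
  have ys: "distinct ys" "set ys = UNIV" "length ys = CARD('n)"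
    using xs by (auto simp: ys_def distinct_card[symmetric])
  have "sorted (map (\<lambda>i. - \<sigma> i) ys)" by (simp add: ys_def)
  then have desc: "sorted_wrt (\<lambda>a b. \<sigma> b \<le> \<sigma> a) ys"
    by (simp add: sorted_map)
  then have "sorted (rev (map \<sigma> ys))"
    by (simp add: sorted_wrt_rev sorted_wrt_map)
  moreover have "image_mset \<sigma> (mset_set UNIV) = mset (rev (map \<sigma> ys))"
    using ys by (metis mset_map mset_rev mset_set_set)
  ultimately have sl: "sorted_list_of_multiset (image_mset \<sigma> (mset_set UNIV)) = rev (map \<sigma> ys)"
    by (metis sorted_list_of_multiset_mset sorted_sort_id)
  define T where "T = set (take k ys)"
  define t where "t = \<sigma> (ys ! (k - 1))"
  have cardT: "card T = k" unfolding T_def using ys k by (simp add: distinct_card)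
  have sumT: "sum_list (take k (map \<sigma> ys)) = sum \<sigma> T"
    unfolding T_def using ys(1) by (simp add: take_map sum_list_distinct_conv_sum_set)
  have top: "t \<le> \<sigma> i" if iT: "i \<in> T" for i
  proof -
    obtain a where "a < k" "a < length ys" "i = ys ! a"
      using iT by (auto simp: T_def in_set_conv_nth)
    then show ?thesis
      using sorted_wrt_nth_less[OF desc, of a "k - 1"] k ys(3)
      by (cases "a = k - 1") (auto simp: t_def)
  qed
  have rest: "\<sigma> i \<le> t" if iT: "i \<notin> T" for i
  proof -
    obtain b where b: "b < length ys" "i = ys ! b"
      using ys(2) by (metis UNIV_I in_set_conv_nth)
    have "k \<le> b"
    proof (rule ccontr)
      assume "\<not> k \<le> b"
      then have "i \<in> T" using b by (auto simp: T_def in_set_conv_nth intro!: exI[of _ b])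
      then show False using iT by simp
    qed
    then have "k - 1 < b" using k by simp
    then show ?thesis using sorted_wrt_nth_less[OF desc, of "k - 1" b] b by (simp add: t_def)
  qed
  have tT: "t \<in> \<sigma> ` T"
    unfolding t_def T_def
    by (rule imageI) (use k ys(3) in \<open>auto simp: in_set_conv_nth intro!: exI[of _ "k - 1"]\<close>)
  show ?thesis
    by (rule that[OF cardT _ top rest tT]) (simp add: sl sumT)
qed

lemma sum_weighted_le_sum_largest:
  fixes \<sigma> c :: "'n::finite \<Rightarrow> real"
  assumes top: "\<And>i. i \<in> T \<Longrightarrow> t \<le> \<sigma> i" and rest: "\<And>i. i \<notin> T \<Longrightarrow> \<sigma> i \<le> t"
    and c: "\<And>i. 0 \<le> c i" "\<And>i. c i \<le> 1" and total: "sum c UNIV \<le> real (card T)"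
    and "0 \<le> t"
  shows "(\<Sum>i\<in>UNIV. \<sigma> i * c i) \<le> sum \<sigma> T"
proof -
  have "\<sigma> i * c i - (if i \<in> T then \<sigma> i else 0) \<le> t * c i - (if i \<in> T then t else 0)" for i
  proof (cases "i \<in> T")
    case True
    then have "(\<sigma> i - t) * (c i - 1) \<le> 0" using top c by (intro mult_nonneg_nonpos) auto
    then show ?thesis using True by (simp add: algebra_simps)
  next
    case False
    then have "(t - \<sigma> i) * c i \<ge> 0" using rest c by simp
    then show ?thesis using False by (simp add: algebra_simps)
  qed
  then have "(\<Sum>i\<in>UNIV. \<sigma> i * c i - (if i \<in> T then \<sigma> i else 0))
      \<le> (\<Sum>i\<in>UNIV. t * c i - (if i \<in> T then t else 0))"
    by (rule sum_mono)
  moreover have "t * sum c UNIV \<le> card T * t"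
    using mult_left_mono[OF total \<open>0 \<le> t\<close>] by (simp add: mult.commute)
  ultimately show ?thesis by (simp add: sum_subtractf sum_distrib_left sum.If_cases)
qed

definition suborthonormal :: "('i \<Rightarrow> complex^'n) \<Rightarrow> bool" where
  "suborthonormal e \<longleftrightarrow> (\<forall>i j. i \<noteq> j \<longrightarrow> cinner (e i) (e j) = 0) \<and> (\<forall>i. norm (e i) \<le> 1)"

lemma norm_orthonormal_system: "orthonormal_system v \<Longrightarrow> norm (v i) = 1"
  by (simp add: orthonormal_system_def norm_eq_1_iff_cinner)

lemma orthonormal_system_imp_suborthonormal: "orthonormal_system v \<Longrightarrow> suborthonormal v"
  using norm_orthonormal_system[of v] by (simp add: suborthonormal_def orthonormal_system_def)

lemma bessel_inequality:
  fixes e :: "'i::finite \<Rightarrow> complex^'n"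
  assumes "suborthonormal e"
  shows "(\<Sum>i\<in>UNIV. (cmod (cinner (e i) y))\<^sup>2) \<le> (norm y)\<^sup>2"
proof -
  have orth: "\<And>i j. i \<noteq> j \<Longrightarrow> cinner (e i) (e j) = 0" and short: "\<And>i. norm (e i) \<le> 1"
    using assms by (auto simp: suborthonormal_def)
  define c where "c i = cinner (e i) y" for i
  define s where "s = (\<Sum>i\<in>UNIV. c i *s e i)"
  have sy: "cinner s y = (\<Sum>i\<in>UNIV. of_real ((cmod (c i))\<^sup>2))"
    by (simp add: s_def cinner_sum_left cinner_smult_left c_def[symmetric] cnj_mult_self)
  have ys: "cinner y s = (\<Sum>i\<in>UNIV. of_real ((cmod (c i))\<^sup>2))"
    using sy by (metis cinner_commute Reals_cnj_iff Reals_of_real sum_in_Reals)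
  have "cinner s s = (\<Sum>i\<in>UNIV. \<Sum>j\<in>UNIV. c i * (cnj (c j) * cinner (e j) (e i)))"
    by (simp add: s_def cinner_sum_left cinner_sum_right cinner_smult_left cinner_smult_right
        sum_distrib_left)
  also have "\<dots> = (\<Sum>i\<in>UNIV. \<Sum>j\<in>UNIV. if j = i then c i * (cnj (c i) * cinner (e i) (e i)) else 0)"
    by (intro sum.cong refl) (auto simp: orth)
  also have "\<dots> = (\<Sum>i\<in>UNIV. c i * (cnj (c i) * cinner (e i) (e i)))"
    by simp
  also have "\<dots> = (\<Sum>i\<in>UNIV. of_real ((cmod (c i))\<^sup>2 * (norm (e i))\<^sup>2))"
    by (intro sum.cong refl) (metis cinner_self cnj_mult_self mult.assoc mult.commute of_real_mult)
  finally have ss: "cinner s s = \<dots>" .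
  have "(norm (y - s))\<^sup>2 = Re (cinner y y) - Re (cinner y s) - Re (cinner s y) + Re (cinner s s)"
    by (simp add: power2_norm_eq_inner cinner_diff_left cinner_diff_right flip: Re_cinner)
  also have "\<dots> = (norm y)\<^sup>2 - 2 * (\<Sum>i\<in>UNIV. (cmod (c i))\<^sup>2)
      + (\<Sum>i\<in>UNIV. (cmod (c i))\<^sup>2 * (norm (e i))\<^sup>2)"
    by (simp add: sy ys ss Re_sum Re_cinner power2_norm_eq_inner)
  finally have "0 \<le> \<dots>" by (metis zero_le_power2)
  moreover have "(\<Sum>i\<in>UNIV. (cmod (c i))\<^sup>2 * (norm (e i))\<^sup>2) \<le> (\<Sum>i\<in>UNIV. (cmod (c i))\<^sup>2)"
    using short by (intro sum_mono mult_left_le) (auto simp: power_le_one)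
  ultimately show ?thesis by (simp add: c_def)
qed

lemma bessel_inequality_sum:
  fixes e :: "'i::finite \<Rightarrow> complex^'n" and x :: "'j::finite \<Rightarrow> complex^'n"
  assumes "suborthonormal e"
  shows "(\<Sum>i\<in>UNIV. \<Sum>j\<in>UNIV. (cmod (cinner (e i) (x j)))\<^sup>2) \<le> (\<Sum>j\<in>UNIV. (norm (x j))\<^sup>2)"
  by (subst sum.swap) (intro sum_mono bessel_inequality[OF assms])

lemma ky_fan_norm_singular_decomposition:
  fixes C :: "complex^'n^'n"
  assumes k: "1 \<le> k" "k \<le> CARD('n)"
  obtains v u :: "'n \<Rightarrow> complex^'n" and \<sigma> :: "'n \<Rightarrow> real" and T :: "'n set" and t :: real
  where "orthonormal_system v" "suborthonormal u"
    "\<And>i. C *v v i = \<sigma> i *\<^sub>R u i" "\<And>i. 0 \<le> \<sigma> i" "\<And>i. cinner (u i) (C *v v i) = of_real (\<sigma> i)"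
    "card T = k" "ky_fan_norm k C = sum \<sigma> T"
    "\<And>i. i \<in> T \<Longrightarrow> t \<le> \<sigma> i" "\<And>i. i \<notin> T \<Longrightarrow> \<sigma> i \<le> t" "0 \<le> t"
proof -
  obtain v :: "'n \<Rightarrow> complex^'n" where v: "orthonormal_system v"
    and orth: "\<And>i j. i \<noteq> j \<Longrightarrow> cinner (C *v v i) (C *v v j) = 0"
    and sv: "singular_values C = image_mset (\<lambda>i. norm (C *v v i)) (mset_set UNIV)"
    using singular_value_basis[of C] by blast
  define \<sigma> where "\<sigma> i = norm (C *v v i)" for i
  define u where "u i = (1 / \<sigma> i) *\<^sub>R (C *v v i)" for i
  have Cv: "C *v v i = \<sigma> i *\<^sub>R u i" for i
    by (cases "\<sigma> i = 0") (auto simp: u_def \<sigma>_def)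
  have "norm (u i) \<le> 1" for i
    by (cases "\<sigma> i = 0") (auto simp: u_def \<sigma>_def)
  then have "suborthonormal u"
    using orth by (auto simp: suborthonormal_def u_def cinner_scaleR_left cinner_scaleR_right)
  have "cinner (u i) (C *v v i) = of_real (\<sigma> i)" for i
    by (cases "\<sigma> i = 0")
      (auto simp: u_def cinner_scaleR_left cinner_self \<sigma>_def power2_eq_square)
  moreover obtain T t where T: "card T = k"
    "sum_list (take k (rev (sorted_list_of_multiset (image_mset \<sigma> (mset_set UNIV))))) = sum \<sigma> T"
    and top: "\<And>i. i \<in> T \<Longrightarrow> t \<le> \<sigma> i" and rest: "\<And>i. i \<notin> T \<Longrightarrow> \<sigma> i \<le> t" and "t \<in> \<sigma> ` T"
    using sum_largest_values[OF k, of \<sigma>] by blast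
  moreover have "ky_fan_norm k C = sum \<sigma> T"
    using T(2) by (simp add: ky_fan_norm_def sv \<sigma>_def[abs_def])
  moreover have "0 \<le> t" using \<open>t \<in> \<sigma> ` T\<close> by (auto simp: \<sigma>_def)
  ultimately show ?thesis
    using that[OF v \<open>suborthonormal u\<close> Cv _ _ T(1) _ top rest] by (simp add: \<sigma>_def)
qed

lemma Re_cinner_le_singular_weights:
  fixes C :: "complex^'n^'n" and v u :: "'n \<Rightarrow> complex^'n"
  assumes v: "orthonormal_system v" and Cv: "\<And>i. C *v v i = \<sigma> i *\<^sub>R u i" and \<sigma>: "\<And>i. 0 \<le> \<sigma> i"
  shows "Re (cinner y (C *v x))
    \<le> (\<Sum>i\<in>UNIV. \<sigma> i * (((cmod (cinner (v i) x))\<^sup>2 + (cmod (cinner (u i) y))\<^sup>2) / 2))"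
proof -
  define a where "a i = cinner (v i) x" for i
  define b where "b i = cinner (u i) y" for i
  have "C *v x = C *v (\<Sum>i\<in>UNIV. a i *s v i)"
    unfolding a_def using orthonormal_system_expansion[OF v] by metis
  also have "\<dots> = (\<Sum>i\<in>UNIV. a i *s (\<sigma> i *\<^sub>R u i))"
    by (simp add: linear_sum[OF matrix_vector_mul_linear] matrix_vector_mult_smult Cv)
  finally have "cinner y (C *v x) = (\<Sum>i\<in>UNIV. a i * (of_real (\<sigma> i) * cnj (b i)))"
    by (simp add: cinner_sum_right cinner_smult_right cinner_scaleR_right b_def
        flip: cinner_commute)
  then have "Re (cinner y (C *v x)) \<le> (\<Sum>i\<in>UNIV. cmod (a i * (of_real (\<sigma> i) * cnj (b i))))"
    by (metis complex_Re_le_cmod norm_sum order_trans)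
  also have "\<dots> = (\<Sum>i\<in>UNIV. \<sigma> i * (cmod (a i) * cmod (b i)))"
    using \<sigma> by (simp add: norm_mult mult_ac)
  also have "\<dots> \<le> (\<Sum>i\<in>UNIV. \<sigma> i * (((cmod (a i))\<^sup>2 + (cmod (b i))\<^sup>2) / 2))"
    using \<sigma> sum_squares_bound[of "cmod (a i)" "cmod (b i)" for i]
    by (intro sum_mono mult_left_mono) (simp_all add: mult_ac)
  finally show ?thesis by (simp add: a_def b_def)
qed

definition ky_fan_pairing :: "('n \<Rightarrow> complex^'n) \<Rightarrow> ('n \<Rightarrow> complex^'n) \<Rightarrow> complex^'n^'n \<Rightarrow> real" where
  "ky_fan_pairing x y C = Re (\<Sum>j\<in>UNIV. cinner (y j) (C *v x j))"

definition ky_fan_admissible :: "nat \<Rightarrow> ('n \<Rightarrow> complex^'n) \<Rightarrow> ('n \<Rightarrow> complex^'n) \<Rightarrow> bool" where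
  "ky_fan_admissible k x y \<longleftrightarrow> suborthonormal x \<and> suborthonormal y
     \<and> (\<Sum>j\<in>UNIV. (norm (x j))\<^sup>2) \<le> real k \<and> (\<Sum>j\<in>UNIV. (norm (y j))\<^sup>2) \<le> real k"

lemma linear_ky_fan_pairing:
  fixes x y :: "'n \<Rightarrow> complex^'n"
  shows "linear (ky_fan_pairing x y)"
proof (rule linearI)
  fix A B :: "complex^'n^'n" and r :: real
  show "ky_fan_pairing x y (A + B) = ky_fan_pairing x y A + ky_fan_pairing x y B"
    by (simp add: ky_fan_pairing_def matrix_vector_mult_add_rdistrib cinner_add_right sum.distrib)
  have "(r *\<^sub>R A) *v z = r *\<^sub>R (A *v z)" for z :: "complex^'n"
    by (simp add: matrix_vector_mult_def vec_eq_iff scaleR_sum_right)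
  then show "ky_fan_pairing x y (r *\<^sub>R A) = r *\<^sub>R ky_fan_pairing x y A"
    by (simp add: ky_fan_pairing_def cinner_scaleR_right sum_distrib_left[symmetric])
qed

lemma ky_fan_pairing_le_ky_fan_norm:
  fixes C :: "complex^'n^'n"
  assumes k: "1 \<le> k" "k \<le> CARD('n)" and adm: "ky_fan_admissible k x y"
  shows "ky_fan_pairing x y C \<le> ky_fan_norm k C"
proof -
  obtain v u :: "'n \<Rightarrow> complex^'n" and \<sigma> :: "'n \<Rightarrow> real" and T :: "'n set" and t :: real
  where v: "orthonormal_system v" and u: "suborthonormal u"
    and Cv: "\<And>i. C *v v i = \<sigma> i *\<^sub>R u i" and \<sigma>: "\<And>i. 0 \<le> \<sigma> i"
    and "\<And>i. cinner (u i) (C *v v i) = of_real (\<sigma> i)"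
    and T: "card T = k" "ky_fan_norm k C = sum \<sigma> T"
    and top: "\<And>i. i \<in> T \<Longrightarrow> t \<le> \<sigma> i" and rest: "\<And>i. i \<notin> T \<Longrightarrow> \<sigma> i \<le> t" and "0 \<le> t"
    using ky_fan_norm_singular_decomposition[OF k, of C] by blast
  have x: "suborthonormal x" "(\<Sum>j\<in>UNIV. (norm (x j))\<^sup>2) \<le> real k"
    and y: "suborthonormal y" "(\<Sum>j\<in>UNIV. (norm (y j))\<^sup>2) \<le> real k"
    using adm by (auto simp: ky_fan_admissible_def)
  define A where "A i j = (cmod (cinner (v i) (x j)))\<^sup>2" for i j
  define B where "B i j = (cmod (cinner (u i) (y j)))\<^sup>2" for i j
  define c where "c i = (\<Sum>j\<in>UNIV. (A i j + B i j) / 2)" for i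
  have "ky_fan_pairing x y C = (\<Sum>j\<in>UNIV. Re (cinner (y j) (C *v x j)))"
    by (simp add: ky_fan_pairing_def Re_sum)
  also have "\<dots> \<le> (\<Sum>j\<in>UNIV. \<Sum>i\<in>UNIV. \<sigma> i * ((A i j + B i j) / 2))"
    unfolding A_def B_def by (intro sum_mono Re_cinner_le_singular_weights[OF v Cv \<sigma>])
  also have "\<dots> = (\<Sum>i\<in>UNIV. \<sigma> i * c i)"
    unfolding c_def sum_distrib_left by (rule sum.swap)
  also have "\<dots> \<le> sum \<sigma> T"
  proof (rule sum_weighted_le_sum_largest[OF top rest])
    fix i
    show "0 \<le> c i" by (simp add: c_def A_def B_def sum_nonneg)
    have "(\<Sum>j\<in>UNIV. A i j) \<le> 1"
      using bessel_inequality[OF x(1), of "v i"] norm_orthonormal_system[OF v]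
      by (simp add: A_def cmod_cinner_commute)
    moreover have "(\<Sum>j\<in>UNIV. B i j) \<le> 1"
      using bessel_inequality[OF y(1), of "u i"] u
      by (simp add: B_def cmod_cinner_commute suborthonormal_def power_le_one order_trans)
    ultimately show "c i \<le> 1" by (simp add: c_def sum.distrib sum_divide_distrib[symmetric])
  next
    have "(\<Sum>i\<in>UNIV. \<Sum>j\<in>UNIV. A i j) \<le> real k"
      using bessel_inequality_sum[OF orthonormal_system_imp_suborthonormal[OF v], of x] x(2)
      unfolding A_def by linarith
    moreover have "(\<Sum>i\<in>UNIV. \<Sum>j\<in>UNIV. B i j) \<le> real k"
      using bessel_inequality_sum[OF u, of y] y(2) unfolding B_def by linarith
    ultimately show "sum c UNIV \<le> real (card T)"
      using T(1) by (simp add: c_def sum.distrib sum_divide_distrib[symmetric])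
  qed (use \<open>0 \<le> t\<close> in auto)
  finally show ?thesis using T(2) by simp
qed

lemma ky_fan_pairing_attains_ky_fan_norm:
  fixes C :: "complex^'n^'n"
  assumes k: "1 \<le> k" "k \<le> CARD('n)"
  obtains x y where "ky_fan_admissible k x y" "ky_fan_pairing x y C = ky_fan_norm k C"
proof -
  obtain v u :: "'n \<Rightarrow> complex^'n" and \<sigma> :: "'n \<Rightarrow> real" and T :: "'n set" and t :: real
  where v: "orthonormal_system v" and u: "suborthonormal u"
    and "\<And>i. C *v v i = \<sigma> i *\<^sub>R u i" "\<And>i. 0 \<le> \<sigma> i"
    and uCv: "\<And>i. cinner (u i) (C *v v i) = of_real (\<sigma> i)"
    and T: "card T = k" "ky_fan_norm k C = sum \<sigma> T"
    and "\<And>i. i \<in> T \<Longrightarrow> t \<le> \<sigma> i" "\<And>i. i \<notin> T \<Longrightarrow> \<sigma> i \<le> t" "0 \<le> t"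
    using ky_fan_norm_singular_decomposition[OF k, of C] by blast
  define x where "x j = (if j \<in> T then v j else 0)" for j
  define y where "y j = (if j \<in> T then u j else 0)" for j
  have sub: "suborthonormal x" "suborthonormal y"
    using orthonormal_system_imp_suborthonormal[OF v] u
    by (auto simp: suborthonormal_def x_def y_def)
  have sum_sq: "(\<Sum>j\<in>UNIV. (norm (z j))\<^sup>2) \<le> real k"
    if "suborthonormal z" "\<And>j. j \<notin> T \<Longrightarrow> z j = 0" for z :: "'n \<Rightarrow> complex^'n"
  proof -
    have "(\<Sum>j\<in>UNIV. (norm (z j))\<^sup>2) \<le> (\<Sum>j\<in>UNIV. if j \<in> T then 1 else 0)"
      using that by (intro sum_mono) (auto simp: suborthonormal_def power_le_one)
    then show ?thesis using T(1) by (simp add: sum.If_cases)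
  qed
  have "ky_fan_admissible k x y"
    unfolding ky_fan_admissible_def by (intro conjI sub sum_sq) (simp_all add: x_def y_def)
  moreover have "ky_fan_pairing x y C = sum \<sigma> T"
    by (simp add: ky_fan_pairing_def x_def y_def uCv if_distrib Re_sum sum.If_cases)
  ultimately show ?thesis using that T(2) by simp
qed

lemma ky_fan_norm_subgradient:
  fixes A :: "complex^'n^'n"
  assumes k: "1 \<le> k" "k \<le> CARD('n)"
  obtains f where "linear f" "\<And>B. ky_fan_norm k A + f B \<le> ky_fan_norm k (A + B)"
proof -
  obtain x y where adm: "ky_fan_admissible k x y" and eq: "ky_fan_pairing x y A = ky_fan_norm k A"
    by (rule ky_fan_pairing_attains_ky_fan_norm[OF k])
  have "ky_fan_norm k A + ky_fan_pairing x y B \<le> ky_fan_norm k (A + B)" for B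
    using ky_fan_pairing_le_ky_fan_norm[OF k adm, of "A + B"] eq
    by (simp add: linear_add[OF linear_ky_fan_pairing])
  then show ?thesis using that linear_ky_fan_pairing by blast
qed

lemma convex_on_ky_fan_norm:
  assumes k: "1 \<le> k" "k \<le> CARD('n)"
  shows "convex_on UNIV (ky_fan_norm k :: complex^'n^'n \<Rightarrow> real)"
proof (rule convex_onI)
  fix t :: real and A B :: "complex^'n^'n"
  assume t: "0 < t" "t < 1"
  let ?C = "(1 - t) *\<^sub>R A + t *\<^sub>R B"
  obtain x y where adm: "ky_fan_admissible k x y" and eq: "ky_fan_pairing x y ?C = ky_fan_norm k ?C"
    by (rule ky_fan_pairing_attains_ky_fan_norm[OF k])
  have "ky_fan_norm k ?C = (1 - t) * ky_fan_pairing x y A + t * ky_fan_pairing x y B"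
    using eq by (simp add: linear_add[OF linear_ky_fan_pairing] linear_scale[OF linear_ky_fan_pairing])
  also have "\<dots> \<le> (1 - t) * ky_fan_norm k A + t * ky_fan_norm k B"
    using t ky_fan_pairing_le_ky_fan_norm[OF k adm] by (intro add_mono mult_left_mono) auto
  finally show "ky_fan_norm k ?C \<le> (1 - t) * ky_fan_norm k A + t * ky_fan_norm k B" .
qed simp

lemma continuous_on_ky_fan_norm:
  assumes "1 \<le> k" "k \<le> CARD('n)"
  shows "continuous_on UNIV (ky_fan_norm k :: complex^'n^'n \<Rightarrow> real)"
  by (rule convex_on_continuous[OF open_UNIV convex_on_ky_fan_norm[OF assms]])

lemma borel_measurable_ky_fan_norm:
  assumes "1 \<le> k" "k \<le> CARD('n)"
  shows "(ky_fan_norm k :: complex^'n^'n \<Rightarrow> real) \<in> borel_measurable borel"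
  by (rule borel_measurable_continuous_onI[OF continuous_on_ky_fan_norm[OF assms]])

section \<open>A Paley--Zygmund inequality\<close>

lemma paley_zygmund_mean_zero:
  fixes Z :: "'a \<Rightarrow> real"
  assumes int: "integrable M Z" and mean: "integral\<^sup>L M Z = 0"
  shows "(\<integral>\<^sup>+x. ennreal \<bar>Z x\<bar> \<partial>M)\<^sup>2
    \<le> 4 * emeasure M {x \<in> space M. 0 \<le> Z x} * (\<integral>\<^sup>+x. ennreal ((Z x)\<^sup>2) \<partial>M)"
proof -
  define E where "E = {x \<in> space M. 0 \<le> Z x}"
  have [measurable]: "Z \<in> borel_measurable M" using int by simp
  have E: "E \<in> sets M" unfolding E_def by measurable
  have int_pos: "integrable M (\<lambda>x. max (Z x) 0)" using int by simp
  \<comment> \<open>Since Z has mean zero, its positive and negative parts have the same integral.\<close>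
  have "(\<integral>x. \<bar>Z x\<bar> \<partial>M) = (\<integral>x. 2 * max (Z x) 0 - Z x \<partial>M)"
    by (intro Bochner_Integration.integral_cong) auto
  also have "\<dots> = 2 * (\<integral>x. max (Z x) 0 \<partial>M)"
    using int int_pos mean by simp
  finally have abs_eq: "(\<integral>x. \<bar>Z x\<bar> \<partial>M) = 2 * (\<integral>x. max (Z x) 0 \<partial>M)" .
  have "(\<integral>\<^sup>+x. ennreal \<bar>Z x\<bar> \<partial>M) = ennreal (\<integral>x. \<bar>Z x\<bar> \<partial>M)"
    using int by (intro nn_integral_eq_integral) auto
  also have "\<dots> = 2 * ennreal (\<integral>x. max (Z x) 0 \<partial>M)"
    unfolding abs_eq by (subst ennreal_mult') simp_all
  also have "ennreal (\<integral>x. max (Z x) 0 \<partial>M) = (\<integral>\<^sup>+x. ennreal (max (Z x) 0) \<partial>M)"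
    using int_pos by (intro nn_integral_eq_integral[symmetric]) auto
  also have "\<dots> = (\<integral>\<^sup>+x. ennreal (Z x) * indicator E x \<partial>M)"
    by (intro nn_integral_cong) (auto simp: E_def ennreal_neg split: split_indicator)
  finally have "(\<integral>\<^sup>+x. ennreal \<bar>Z x\<bar> \<partial>M)\<^sup>2 = 4 * (\<integral>\<^sup>+x. ennreal (Z x) * indicator E x \<partial>M)\<^sup>2"
    by (simp add: power_mult_distrib)
  also have "\<dots> \<le> 4 * ((\<integral>\<^sup>+x. ennreal (Z x) ^ 2 \<partial>M) * (\<integral>\<^sup>+x. indicator E x ^ 2 \<partial>M))"
    using E by (intro mult_left_mono Cauchy_Schwarz_nn_integral) auto
  also have "(\<integral>\<^sup>+x. indicator E x ^ 2 \<partial>M) = emeasure M E"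
  proof -
    have "(\<integral>\<^sup>+x. indicator E x ^ 2 \<partial>M) = (\<integral>\<^sup>+x. indicator E x \<partial>M)"
      by (intro nn_integral_cong) (simp split: split_indicator)
    then show ?thesis using E by simp
  qed
  also have "4 * ((\<integral>\<^sup>+x. ennreal (Z x) ^ 2 \<partial>M) * emeasure M E)
      \<le> 4 * ((\<integral>\<^sup>+x. ennreal ((Z x)\<^sup>2) \<partial>M) * emeasure M E)"
    by (intro mult_left_mono mult_right_mono nn_integral_mono, case_tac "0 \<le> Z x")
      (simp_all add: ennreal_power ennreal_neg)
  finally show ?thesis
    unfolding E_def by (simp add: mult_ac)
qed

lemma pz_ratio_le_emeasure_nonneg:
  fixes M :: "'a measure" and X :: "'a \<Rightarrow> 'b" and f :: "'b \<Rightarrow> real"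
  assumes "prob_space M" and int: "integrable M (\<lambda>\<omega>. f (X \<omega>))" and mean: "(\<integral>\<omega>. f (X \<omega>) \<partial>M) = 0"
  shows "ennreal (1/4) * pz_ratio M X f \<le> emeasure M {\<omega> \<in> space M. 0 \<le> f (X \<omega>)}"
proof -
  interpret prob_space M by fact
  define E where "E = {\<omega> \<in> space M. 0 \<le> f (X \<omega>)}"
  define S where "S = (\<integral>\<^sup>+\<omega>. ennreal ((f (X \<omega>))\<^sup>2) \<partial>M)"
  have [measurable]: "(\<lambda>\<omega>. f (X \<omega>)) \<in> borel_measurable M" using int by simp
  show ?thesis
  proof (cases "S = 0")
    case True
    then have "AE \<omega> in M. ennreal ((f (X \<omega>))\<^sup>2) = 0"
      by (simp add: S_def nn_integral_0_iff_AE)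
    then have "AE \<omega> in M. \<omega> \<in> E"
      by (rule AE_mp) (auto simp: E_def)
    then have "emeasure M E = 1"
      by (subst emeasure_eq_1_AE) (auto simp: E_def)
    then show ?thesis
      using True by (simp add: pz_ratio_def S_def[symmetric] E_def[symmetric] ennreal_le_1)
  next
    case False
    then have "pz_ratio M X f \<le> 4 * emeasure M E"
      using paley_zygmund_mean_zero[OF int mean]
      by (simp add: pz_ratio_def S_def[symmetric] E_def[symmetric] divide_le_posI_ennreal
          mult_ac zero_less_iff_neq_zero)
    then have "ennreal (1/4) * pz_ratio M X f \<le> ennreal (1/4) * (4 * emeasure M E)"
      by (rule mult_left_mono) simp
    also have "\<dots> = emeasure M E"
      using ennreal_mult'[of "1/4" 4] by (simp add: mult.assoc[symmetric])
    finally show ?thesis by (simp add: E_def)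
  qed
qed

lemma pz_ratio_linear_le_emeasure_nonneg:
  fixes X :: "'a \<Rightarrow> 'b::euclidean_space" and f :: "'b \<Rightarrow> real"
  assumes "prob_space M" and "integrable M X" and "(\<integral>\<omega>. X \<omega> \<partial>M) = 0" and "linear f"
  shows "ennreal (1/4) * pz_ratio M X f \<le> emeasure M {\<omega> \<in> space M. 0 \<le> f (X \<omega>)}"
proof (rule pz_ratio_le_emeasure_nonneg[OF assms(1)])
  have f: "bounded_linear f" using assms(4) by (simp add: linear_conv_bounded_linear)
  show "integrable M (\<lambda>\<omega>. f (X \<omega>))" by (rule integrable_bounded_linear[OF f assms(2)])
  show "(\<integral>\<omega>. f (X \<omega>) \<partial>M) = 0"
    using integral_bounded_linear[OF f assms(2)] assms(3) linear_0[OF assms(4)] by simp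
qed

theorem lemma5:
  fixes M :: "'a measure" and X :: "'a \<Rightarrow> complex^'n^'n"
    and A :: "complex^'n^'n" and k :: nat
  assumes "prob_space M"
    and "X \<in> borel_measurable M"
    and "integrable M X" and "(\<integral>\<omega>. X \<omega> \<partial>M) = 0"
    and "\<forall>\<omega>\<in>space M. hermitian (X \<omega>)"
    and "hermitian A"
    and "k \<le> CARD('n)"
    and "ky_fan_norm k A > 0"
  shows "emeasure M {\<omega> \<in> space M. ky_fan_norm k (A + X \<omega>) \<ge> ky_fan_norm k A}
           \<ge> ennreal (1/4) * (INF f \<in> {f :: complex^'n^'n \<Rightarrow> real. linear f}. pz_ratio M X f)"
proof -
  have "1 \<le> k" using assms(8) by (cases k) (auto simp: ky_fan_norm_def)
  note k = this assms(7)
  obtain f where lin: "linear f" and sub: "\<And>B. ky_fan_norm k A + f B \<le> ky_fan_norm k (A + B)"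
    using ky_fan_norm_subgradient[OF k] by blast
  have "(\<lambda>\<omega>. ky_fan_norm k (A + X \<omega>)) \<in> borel_measurable M"
    by (rule measurable_compose[OF _ borel_measurable_ky_fan_norm[OF k]]) (use assms(2) in measurable)
  then have ky_sets: "{\<omega> \<in> space M. ky_fan_norm k (A + X \<omega>) \<ge> ky_fan_norm k A} \<in> sets M"
    by measurable
  have "ennreal (1/4) * (INF f \<in> {f :: complex^'n^'n \<Rightarrow> real. linear f}. pz_ratio M X f)
        \<le> ennreal (1/4) * pz_ratio M X f"
    using lin by (intro mult_left_mono INF_lower) auto
  also have "\<dots> \<le> emeasure M {\<omega> \<in> space M. 0 \<le> f (X \<omega>)}"
    by (rule pz_ratio_linear_le_emeasure_nonneg[OF assms(1,3,4) lin])
  also have "\<dots> \<le> emeasure M {\<omega> \<in> space M. ky_fan_norm k (A + X \<omega>) \<ge> ky_fan_norm k A}"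
    by (intro emeasure_mono ky_sets) (auto intro: order_trans[OF le_add_same_cancel1[THEN iffD2] sub])
  finally show ?thesis .
qed

end
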